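(* Every finitely generated free partially commutative monoid is isomorphic to an automaton semigroup.
   Context: A free partially commutative monoid is a monoid with presentation $\langle X\mid R\rangle$, $X=\{x_1,\dots,x_n\}$ finite, where $R\subseteq\{(x_ix_j,x_jx_i)\}$. A synchronous automaton is $(Q,\Sigma,t,o)$ with $Q$ a finite set of states, $\Sigma$ a finite alphabet, $t:Q\times\Sigma\to Q$ and $o:Q\times\Sigma\to\Sigma$. Each state $q$ induces $q:\Sigma^*\to\Sigma^*$ by $q(\emptyset)=\emptyset$, $q(\sigma w)=o(q,\sigma)\,q'(w)$ with $q'=t(q,\sigma)$. An automaton semigroup is the semigroup of maps $\Sigma^*\to\Sigma^*$ generated under composition by the states of a synchronous automaton. *)

theory Defs
  imports Main "HOL-Library.FuncSet"
begin

(* Free partially commutative monoid <X | R>: words over X modulo the congruence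
   generated by the relations x_i x_j = x_j x_i for (x_i, x_j) in R. *)
inductive trace_step :: "('a \<times> 'a) set \<Rightarrow> 'a list \<Rightarrow> 'a list \<Rightarrow> bool"
  for R where
  swap: "(a, b) \<in> R \<Longrightarrow> trace_step R (u @ [a, b] @ v) (u @ [b, a] @ v)"

definition trace_equiv :: "('a \<times> 'a) set \<Rightarrow> 'a list \<Rightarrow> 'a list \<Rightarrow> bool" where
  "trace_equiv R = equivclp (trace_step R)"

definition is_automaton ::
  "nat set \<Rightarrow> nat set \<Rightarrow> (nat \<Rightarrow> nat \<Rightarrow> nat) \<Rightarrow> (nat \<Rightarrow> nat \<Rightarrow> nat) \<Rightarrow> bool" where
  "is_automaton Q Sig t out \<longleftrightarrow> finite Q \<and> finite Sig \<and>
     (\<forall>q\<in>Q. \<forall>s\<in>Sig. t q s \<in> Q \<and> out q s \<in> Sig)"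

fun state_map :: "(nat \<Rightarrow> nat \<Rightarrow> nat) \<Rightarrow> (nat \<Rightarrow> nat \<Rightarrow> nat) \<Rightarrow> nat \<Rightarrow> nat list \<Rightarrow> nat list" where
  "state_map t out q [] = []"
| "state_map t out q (s # w) = out q s # state_map t out (t q s) w"

definition state_fun :: "nat set \<Rightarrow> (nat \<Rightarrow> nat \<Rightarrow> nat) \<Rightarrow> (nat \<Rightarrow> nat \<Rightarrow> nat) \<Rightarrow> nat \<Rightarrow> nat list \<Rightarrow> nat list" where
  "state_fun Sig t out q = restrict (state_map t out q) (lists Sig)"

inductive_set automaton_semigroup ::
  "nat set \<Rightarrow> nat set \<Rightarrow> (nat \<Rightarrow> nat \<Rightarrow> nat) \<Rightarrow> (nat \<Rightarrow> nat \<Rightarrow> nat) \<Rightarrow> (nat list \<Rightarrow> nat list) set"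
  for Q Sig t out where
  gen: "q \<in> Q \<Longrightarrow> state_fun Sig t out q \<in> automaton_semigroup Q Sig t out"
| comp: "f \<in> automaton_semigroup Q Sig t out \<Longrightarrow> g \<in> automaton_semigroup Q Sig t out \<Longrightarrow>
         compose (lists Sig) f g \<in> automaton_semigroup Q Sig t out"

(* phi induces an isomorphism from <X | R> (words over X mod trace_equiv R, concatenation)
   onto the semigroup S with operation mult *)
definition is_fpcm_iso ::
  "'a set \<Rightarrow> ('a \<times> 'a) set \<Rightarrow> 'b set \<Rightarrow> ('b \<Rightarrow> 'b \<Rightarrow> 'b) \<Rightarrow> ('a list \<Rightarrow> 'b) \<Rightarrow> bool" where
  "is_fpcm_iso X R S mult phi \<longleftrightarrow>
     phi ` lists X = S \<and>
     (\<forall>u\<in>lists X. \<forall>v\<in>lists X. phi u = phi v \<longleftrightarrow> trace_equiv R u v) \<and>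
     (\<forall>u\<in>lists X. \<forall>v\<in>lists X. phi (u @ v) = mult (phi u) (phi v))"

end

theory Submission
  imports Defs
begin

text \<open>
  Enumerate X by h : X -> {0..<N}.  The alphabet is {0..<2^(2N)};
  a letter (tape cell) c is read as two subsets of X, its layer (bits h y) and its shadow
  (bits N + h y).  State 0 is the identity, and generator x has the state Suc (h x): it
  scans the tape from the left, and while the layer or shadow of the current cell contains
  a generator that does not commute with x it adds x to the shadow and moves on; at the
  first other cell it adds x to the layer and becomes the identity.  Started on a blank
  tape, this keeps the tape a heap of pieces: the shadow of a cell is the set of
  generators in the layers to its right, and the layers read from right to left spell
  the input word up to trace equivalence.

  The locale heap_automaton then shows that commuting generators act by commuting
  transformations, so the map word -> transformation factors through trace equivalence,
  and that it is faithful, by decoding the heap built on a long blank tape.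
\<close>

section \<open>Trace equivalence\<close>

lemma trace_equiv_refl: "trace_equiv R u u"
  unfolding trace_equiv_def by simp

lemma trace_equiv_sym: "trace_equiv R u v \<Longrightarrow> trace_equiv R v u"
  unfolding trace_equiv_def by (rule equivclp_sym)

lemma trace_equiv_trans: "trace_equiv R u v \<Longrightarrow> trace_equiv R v w \<Longrightarrow> trace_equiv R u w"
  unfolding trace_equiv_def by (rule equivclp_trans)

lemma trace_step_length: "trace_step R u v \<Longrightarrow> length u = length v"
  by (induction rule: trace_step.induct) auto

lemma trace_equiv_length: "trace_equiv R u v \<Longrightarrow> length u = length v"
  unfolding trace_equiv_def
  by (induction rule: equivclp_induct) (auto dest: trace_step_length)

lemma trace_step_cong: "trace_step R u v \<Longrightarrow> trace_step R (p @ u @ q) (p @ v @ q)"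
  by (induction rule: trace_step.induct) (metis append.assoc trace_step.swap)

lemma trace_equiv_cong: "trace_equiv R u v \<Longrightarrow> trace_equiv R (p @ u @ q) (p @ v @ q)"
  unfolding trace_equiv_def
proof (induction rule: equivclp_induct)
  case (step v w)
  then show ?case
    by (meson equivclp_into_equivclp trace_step_cong)
qed simp

lemma trace_equiv_swap:
  assumes "(a, b) \<in> R \<or> (b, a) \<in> R"
  shows "trace_equiv R (p @ [a, b] @ q) (p @ [b, a] @ q)"
  using assms unfolding trace_equiv_def
proof (elim disjE)
  assume "(a, b) \<in> R"
  then show "equivclp (trace_step R) (p @ [a, b] @ q) (p @ [b, a] @ q)"
    by (intro r_into_equivclp trace_step.swap)
next
  assume "(b, a) \<in> R"
  then show "equivclp (trace_step R) (p @ [a, b] @ q) (p @ [b, a] @ q)"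
    by (intro converse_r_into_equivclp trace_step.swap)
qed

lemma trace_equiv_move:
  assumes "\<forall>y\<in>set u. (x, y) \<in> R \<or> (y, x) \<in> R"
  shows "trace_equiv R (x # u) (u @ [x])"
  using assms
proof (induction u)
  case (Cons y u)
  have "trace_equiv R ([] @ [x, y] @ u) ([] @ [y, x] @ u)"
    using Cons.prems by (intro trace_equiv_swap) simp
  moreover have "trace_equiv R ([y] @ (x # u) @ []) ([y] @ (u @ [x]) @ [])"
    using Cons by (intro trace_equiv_cong) auto
  ultimately show ?case
    by (auto intro: trace_equiv_trans)
qed (simp add: trace_equiv_refl)

lemma foldr_trace_invariant:
  assumes comm: "\<And>a b w. (a, b) \<in> R \<Longrightarrow> F a (F b w) = F b (F a w)"
    and "trace_equiv R u v"
  shows "foldr F u = foldr F v"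
proof -
  have step_invariant: "foldr F u = foldr F v" if "trace_step R u v" for u v
    using that
  proof (induction rule: trace_step.induct)
    case (swap a b u v)
    then show ?case by (simp add: fun_eq_iff comm[OF swap])
  qed
  from assms(2) show ?thesis
    unfolding trace_equiv_def
    by (induction rule: equivclp_induct) (auto dest: step_invariant)
qed

section \<open>Automata with an identity state\<close>

lemma state_map_length: "length (state_map t out q w) = length w"
  by (induction w arbitrary: q) auto

lemma state_map_lists:
  assumes "is_automaton Q Sig t out" "q \<in> Q" "w \<in> lists Sig"
  shows "state_map t out q w \<in> lists Sig"
  using assms(2,3) assms(1)[unfolded is_automaton_def]
  by (induction w arbitrary: q) auto

definition word_map ::
  "nat set \<Rightarrow> (nat \<Rightarrow> nat \<Rightarrow> nat) \<Rightarrow> (nat \<Rightarrow> nat \<Rightarrow> nat) \<Rightarrow> ('a \<Rightarrow> nat) \<Rightarrow> 'a list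
     \<Rightarrow> nat list \<Rightarrow> nat list" where
  "word_map Sig t out st u = restrict (foldr (\<lambda>x. state_map t out (st x)) u) (lists Sig)"

lemma foldr_state_map_lists:
  assumes "is_automaton Q Sig t out" "st ` X \<subseteq> Q" "u \<in> lists X" "w \<in> lists Sig"
  shows "foldr (\<lambda>x. state_map t out (st x)) u w \<in> lists Sig"
  using assms(3)
proof (induction u)
  case (Cons x u)
  then have "foldr (\<lambda>x. state_map t out (st x)) u w \<in> lists Sig" "st x \<in> Q"
    using assms(2) by auto
  then show ?case
    using state_map_lists[OF assms(1)] by simp
qed (use assms(4) in simp)

lemma word_map_append:
  assumes "is_automaton Q Sig t out" "st ` X \<subseteq> Q" "v \<in> lists X"
  shows "word_map Sig t out st (u @ v)
           = compose (lists Sig) (word_map Sig t out st u) (word_map Sig t out st v)"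
  using foldr_state_map_lists[OF assms]
  by (auto simp: word_map_def compose_def fun_eq_iff)

lemma state_fun_word_map: "state_fun Sig t out (st x) = word_map Sig t out st [x]"
  by (simp add: state_fun_def word_map_def)

lemma state_fun_identity:
  assumes "\<And>w. state_map t out q0 w = w"
  shows "state_fun Sig t out q0 = word_map Sig t out st []"
proof -
  have "state_map t out q0 = id"
    using assms by (simp add: fun_eq_iff)
  then show ?thesis
    by (simp add: state_fun_def word_map_def)
qed

lemma automaton_semigroup_word_image:
  assumes aut: "is_automaton Q Sig t out" and Q: "Q = insert q0 (st ` X)"
    and idle: "\<And>w. state_map t out q0 w = w"
  shows "automaton_semigroup Q Sig t out = word_map Sig t out st ` lists X"
proof
  have st: "st ` X \<subseteq> Q"
    using Q by blast
  show "automaton_semigroup Q Sig t out \<subseteq> word_map Sig t out st ` lists X"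
  proof
    fix f assume "f \<in> automaton_semigroup Q Sig t out"
    then show "f \<in> word_map Sig t out st ` lists X"
    proof (induction rule: automaton_semigroup.induct)
      case (gen q)
      then consider "q = q0" | x where "x \<in> X" "q = st x"
        using Q by blast
      then show ?case
      proof cases
        case 1
        then show ?thesis
          using state_fun_identity[OF idle] by (auto intro!: image_eqI[of _ _ "[]"])
      next
        case 2
        then show ?thesis
          using state_fun_word_map by (auto intro!: image_eqI[of _ _ "[x]"])
      qed
    next
      case (comp f g)
      then obtain u v where uv: "u \<in> lists X" "v \<in> lists X"
        and "f = word_map Sig t out st u" "g = word_map Sig t out st v"
        by blast
      then have "compose (lists Sig) f g = word_map Sig t out st (u @ v)"
        using word_map_append[OF aut st uv(2)] by simp
      then show ?case
        using uv by (metis append_in_lists_conv image_eqI)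
    qed
  qed
  show "word_map Sig t out st ` lists X \<subseteq> automaton_semigroup Q Sig t out"
  proof (rule image_subsetI)
    fix u assume "u \<in> lists X"
    then show "word_map Sig t out st u \<in> automaton_semigroup Q Sig t out"
    proof (induction u)
      case Nil
      have "q0 \<in> Q"
        using Q by simp
      then show ?case
        using state_fun_identity[OF idle] by (metis automaton_semigroup.gen)
    next
      case (Cons x u)
      then have "state_fun Sig t out (st x) \<in> automaton_semigroup Q Sig t out"
        using Q by (auto intro: automaton_semigroup.gen)
      moreover have "word_map Sig t out st (x # u)
          = compose (lists Sig) (state_fun Sig t out (st x)) (word_map Sig t out st u)"
        using word_map_append[OF aut st Cons.hyps(2), of "[x]"] state_fun_word_map[of Sig t out st x]
        by simp
      ultimately show ?case
        using Cons.IH by (simp add: automaton_semigroup.comp)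
    qed
  qed
qed

section \<open>The heap automaton\<close>

lemma filter_insert_split:
  assumes "distinct xs" "x \<in> set xs" "x \<notin> L"
  shows "\<exists>u1 u2. filter (\<lambda>y. y \<in> L) xs = u1 @ u2
           \<and> filter (\<lambda>y. y \<in> insert x L) xs = u1 @ x # u2 \<and> set u1 \<subseteq> L"
proof -
  obtain a b where ab: "xs = a @ x # b"
    using assms(2) by (metis split_list)
  then have "x \<notin> set a" "x \<notin> set b"
    using assms(1) by auto
  then have "filter (\<lambda>y. y \<in> insert x L) a = filter (\<lambda>y. y \<in> L) a"
    and "filter (\<lambda>y. y \<in> insert x L) b = filter (\<lambda>y. y \<in> L) b"
    by (auto intro!: filter_cong)
  then show ?thesis
    using ab assms(3)
    by (intro exI[of _ "filter (\<lambda>y. y \<in> L) a"] exI[of _ "filter (\<lambda>y. y \<in> L) b"]) auto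
qed

lemma set_bit_commute: "set_bit i (set_bit j (c::nat)) = set_bit j (set_bit i c)"
  by (rule bit_eqI) (auto simp: bit_set_bit_iff)

locale heap_automaton =
  fixes X :: "'a set" and R :: "('a \<times> 'a) set" and h :: "'a \<Rightarrow> nat" and N :: nat
    and xs :: "'a list"
  assumes h_bij: "bij_betw h X {0..<N}" and R_sub: "R \<subseteq> X \<times> X"
    and set_xs: "set xs = X" and distinct_xs: "distinct xs"
begin

abbreviation shadow_bit :: "'a \<Rightarrow> nat" where
  "shadow_bit y \<equiv> N + h y"

definition layer_set :: "nat \<Rightarrow> 'a set" where
  "layer_set c = {y \<in> X. bit c (h y)}"

definition shadow_set :: "nat \<Rightarrow> 'a set" where
  "shadow_set c = {y \<in> X. bit c (shadow_bit y)}"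

lemma h_inj: "inj_on h X"
  using h_bij by (simp add: bij_betw_def)

lemma h_less: "y \<in> X \<Longrightarrow> h y < N"
  using h_bij by (auto simp: bij_betw_def)

lemma layer_set_layer_bit: "x \<in> X \<Longrightarrow> layer_set (set_bit (h x) c) = insert x (layer_set c)"
  by (auto simp: layer_set_def bit_set_bit_iff inj_on_eq_iff[OF h_inj])

lemma shadow_set_layer_bit: "x \<in> X \<Longrightarrow> shadow_set (set_bit (h x) c) = shadow_set c"
  by (auto simp: shadow_set_def bit_set_bit_iff dest: h_less)

lemma layer_set_shadow_bit: "x \<in> X \<Longrightarrow> layer_set (set_bit (shadow_bit x) c) = layer_set c"
  by (auto simp: layer_set_def bit_set_bit_iff dest: h_less)

lemma shadow_set_shadow_bit:
  "x \<in> X \<Longrightarrow> shadow_set (set_bit (shadow_bit x) c) = insert x (shadow_set c)"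
  by (auto simp: shadow_set_def bit_set_bit_iff inj_on_eq_iff[OF h_inj])

definition dep :: "'a \<Rightarrow> 'a \<Rightarrow> bool" where
  "dep x y \<longleftrightarrow> x = y \<or> ((x, y) \<notin> R \<and> (y, x) \<notin> R)"

definition blocked :: "'a \<Rightarrow> nat \<Rightarrow> bool" where
  "blocked x c \<longleftrightarrow> (\<exists>y \<in> layer_set c \<union> shadow_set c. dep x y)"

text \<open>State 0 is the identity; state Suc (h x) belongs to generator x.\<close>

definition letter :: "nat \<Rightarrow> 'a" where
  "letter q = inv_into X h (q - 1)"

definition next_state :: "nat \<Rightarrow> nat \<Rightarrow> nat" where
  "next_state q c = (if q = 0 then 0 else if blocked (letter q) c then q else 0)"

definition emit :: "nat \<Rightarrow> nat \<Rightarrow> nat" where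
  "emit q c = (if q = 0 then c
     else if blocked (letter q) c then set_bit (shadow_bit (letter q)) c
     else set_bit (h (letter q)) c)"

definition states :: "nat set" where
  "states = {0..N}"

definition Sig :: "nat set" where
  "Sig = {..<2 ^ (2 * N)}"

definition act :: "'a \<Rightarrow> nat list \<Rightarrow> nat list" where
  "act x = state_map next_state emit (Suc (h x))"

lemma letter_state: "x \<in> X \<Longrightarrow> letter (Suc (h x)) = x"
  by (simp add: letter_def h_inj)

lemma states_eq: "states = insert 0 ((\<lambda>x. Suc (h x)) ` X)"
proof -
  have "h ` X = {0..<N}"
    using h_bij by (simp add: bij_betw_def)
  have "q \<in> (\<lambda>x. Suc (h x)) ` X" if "0 < q" "q \<le> N" for q
  proof -
    have "q - 1 \<in> h ` X"
      using that \<open>h ` X = {0..<N}\<close> by auto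
    then obtain x where "x \<in> X" "h x = q - 1"
      by (metis imageE)
    then show ?thesis
      using that(1) by (intro image_eqI[of _ _ x]) auto
  qed
  then show ?thesis
    using h_less by (force simp: states_def Suc_le_eq)
qed

lemma set_bit_in_Sig: "c \<in> Sig \<Longrightarrow> i < 2 * N \<Longrightarrow> set_bit i c \<in> Sig"
  unfolding Sig_def
  by (simp add: take_bit_nat_eq_self_iff[symmetric] take_bit_set_bit_eq)

lemma heap_is_automaton: "is_automaton states Sig next_state emit"
  unfolding is_automaton_def
proof (intro conjI ballI)
  show "finite states" "finite Sig"
    by (simp_all add: states_def Sig_def)
next
  fix q c assume q: "q \<in> states" and c: "c \<in> Sig"
  show "next_state q c \<in> states"
    using q by (simp add: next_state_def states_def)
  show "emit q c \<in> Sig"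
  proof (cases "q = 0")
    case False
    then obtain x where "x \<in> X" "q = Suc (h x)"
      using q states_eq by auto
    then show ?thesis
      using c h_less[of x] by (simp add: emit_def letter_state set_bit_in_Sig)
  qed (simp add: emit_def c)
qed

lemma state_zero_idle: "state_map next_state emit 0 w = w"
  by (induction w) (simp_all add: next_state_def emit_def)

lemma act_Cons:
  assumes "x \<in> X"
  shows "act x (c # w) = (if blocked x c then set_bit (shadow_bit x) c # act x w
                          else set_bit (h x) c # w)"
  by (simp add: act_def next_state_def emit_def letter_state assms state_zero_idle)

lemma act_Nil: "act x [] = []"
  by (simp add: act_def)

lemma act_length: "length (act x w) = length w"
  by (simp add: act_def state_map_length)

lemma blocked_set_bit_independent:
  assumes "b \<in> X" "\<not> dep a b"
  shows "blocked a (set_bit (h b) c) = blocked a c"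
    and "blocked a (set_bit (shadow_bit b) c) = blocked a c"
  using assms
  by (auto simp: blocked_def layer_set_layer_bit shadow_set_layer_bit
      layer_set_shadow_bit shadow_set_shadow_bit)

lemma act_commute:
  assumes "(a, b) \<in> R"
  shows "act a (act b w) = act b (act a w)"
proof (cases "a = b")
  case False
  have ab: "a \<in> X" "b \<in> X"
    using assms R_sub by auto
  have "\<not> dep a b" "\<not> dep b a"
    using assms False by (auto simp: dep_def)
  note unblocked = blocked_set_bit_independent[OF ab(2) this(1)]
    blocked_set_bit_independent[OF ab(1) this(2)]
  show ?thesis
  proof (induction w)
    case (Cons c w)
    then show ?case
      by (cases "blocked a c"; cases "blocked b c")
        (simp_all add: act_Cons ab unblocked set_bit_commute)
  qed (simp add: act_Nil)
qed simp

definition layer :: "nat \<Rightarrow> 'a list" where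
  "layer c = filter (\<lambda>y. y \<in> layer_set c) xs"

definition decode :: "nat list \<Rightarrow> 'a list" where
  "decode cfg = concat (rev (map layer cfg))"

definition placed :: "nat list \<Rightarrow> 'a set" where
  "placed cfg = (\<Union>c\<in>set cfg. layer_set c)"

fun heap :: "nat list \<Rightarrow> bool" where
  "heap [] = True"
| "heap (c # s) \<longleftrightarrow>
     heap s \<and> shadow_set c = placed s \<and> (layer_set c = {} \<longrightarrow> placed s = {})"

lemma set_layer: "set (layer c) = layer_set c"
  using set_xs by (auto simp: layer_def layer_set_def)

lemma set_decode: "set (decode cfg) = placed cfg"
  by (auto simp: decode_def placed_def set_layer)

lemma decode_simps:
  "decode [] = []" "decode (c # s) = decode s @ layer c"
  "decode (p @ s) = decode s @ decode p"
  by (simp_all add: decode_def)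

lemma placed_simps [simp]:
  "placed [] = {}" "placed (c # s) = layer_set c \<union> placed s"
  "placed (p @ s) = placed p \<union> placed s"
  by (auto simp: placed_def)

lemma heap_appendD: "heap (p @ s) \<Longrightarrow> heap s"
  by (induction p) auto

lemma layer_shadow_bit: "x \<in> X \<Longrightarrow> layer (set_bit (shadow_bit x) c) = layer c"
  by (simp add: layer_def layer_set_shadow_bit)

lemma decode_map_shadow_bit: "x \<in> X \<Longrightarrow> decode (map (set_bit (shadow_bit x)) p) = decode p"
  by (induction p) (simp_all add: decode_simps layer_shadow_bit)

lemma placed_map_shadow_bit: "x \<in> X \<Longrightarrow> placed (map (set_bit (shadow_bit x)) p) = placed p"
  by (induction p) (simp_all add: layer_set_shadow_bit)

lemma act_split:
  assumes "x \<in> X" "\<forall>d\<in>set p. blocked x d" "\<not> blocked x c"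
  shows "act x (p @ c # s) = map (set_bit (shadow_bit x)) p @ set_bit (h x) c # s"
  using assms(2) by (induction p) (simp_all add: act_Cons assms(1,3))

lemma placed_step:
  assumes "x \<in> X"
  shows "placed (map (set_bit (shadow_bit x)) p @ set_bit (h x) c # s)
           = insert x (placed (p @ c # s))"
  using assms by (auto simp: placed_map_shadow_bit layer_set_layer_bit)

text \<open>One step preserves the heap invariant.  A blocked cell of a heap has a nonempty
  layer (otherwise its shadow is empty too), so marking it keeps its layer nonempty.\<close>

lemma heap_step:
  assumes "x \<in> X" "\<forall>d\<in>set p. blocked x d" "heap (p @ c # s)"
  shows "heap (map (set_bit (shadow_bit x)) p @ set_bit (h x) c # s)"
  using assms(2,3)
proof (induction p)
  case Nil
  then show ?case
    using assms(1) by (simp add: layer_set_layer_bit shadow_set_layer_bit)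
next
  case (Cons d p)
  then have "layer_set d \<noteq> {}"
    by (auto simp: blocked_def)
  then show ?case
    using Cons assms(1) placed_step[OF assms(1), of p c s]
    by (simp add: layer_set_shadow_bit shadow_set_shadow_bit)
qed

text \<open>The decoded word after placing x is trace equivalent to x followed by the old decoded
  word: everything decoded before x lies in the shadow or the layer of the free cell, and
  so commutes with x.\<close>

lemma decode_step:
  assumes "x \<in> X" "\<not> blocked x c" "heap (p @ c # s)"
  shows "trace_equiv R (decode (map (set_bit (shadow_bit x)) p @ set_bit (h x) c # s))
           (x # decode (p @ c # s))"
proof -
  have shadow_c: "shadow_set c = placed s"
    using heap_appendD[OF assms(3)] by simp
  have "x \<notin> layer_set c"
    using assms(2) by (auto simp: blocked_def dep_def)
  then obtain u1 u2 where "filter (\<lambda>y. y \<in> layer_set c) xs = u1 @ u2"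
    and "filter (\<lambda>y. y \<in> insert x (layer_set c)) xs = u1 @ x # u2"
    and u1: "set u1 \<subseteq> layer_set c"
    using filter_insert_split[OF distinct_xs] assms(1) set_xs by blast
  then have u: "layer c = u1 @ u2" "layer (set_bit (h x) c) = u1 @ x # u2"
    by (simp_all add: layer_def layer_set_layer_bit assms(1))
  have "(x, y) \<in> R \<or> (y, x) \<in> R" if "y \<in> set (decode s @ u1)" for y
  proof -
    have "y \<in> layer_set c \<union> shadow_set c"
      using that u1 shadow_c by (auto simp: set_decode)
    then show ?thesis
      using assms(2) by (auto simp: blocked_def dep_def)
  qed
  then have "trace_equiv R (x # decode s @ u1) ((decode s @ u1) @ [x])"
    by (intro trace_equiv_move) blast
  then have "trace_equiv R ([] @ (x # decode s @ u1) @ u2 @ decode p)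
      ([] @ ((decode s @ u1) @ [x]) @ u2 @ decode p)"
    by (rule trace_equiv_cong)
  moreover have "decode (p @ c # s) = decode s @ u1 @ u2 @ decode p"
    by (simp add: decode_simps u)
  moreover have "decode (map (set_bit (shadow_bit x)) p @ set_bit (h x) c # s)
      = decode s @ u1 @ x # u2 @ decode p"
    by (simp add: decode_simps decode_map_shadow_bit assms(1) u)
  ultimately show ?thesis
    by (simp add: trace_equiv_sym)
qed

lemma free_cell_exists:
  assumes "heap cfg" "length (decode cfg) < length cfg"
  shows "\<exists>c\<in>set cfg. layer_set c = {} \<and> shadow_set c = {}"
  using assms
proof (induction cfg)
  case (Cons c s)
  show ?case
  proof (cases "layer_set c = {}")
    case False
    then have "0 < length (layer c)"
      by (metis length_greater_0_conv set_layer set_empty)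
    moreover have "length (decode s) + length (layer c) < Suc (length s)"
      using Cons.prems(2) by (simp add: decode_simps)
    ultimately have "length (decode s) < length s"
      by linarith
    then show ?thesis using Cons by auto
  qed (use Cons.prems in auto)
qed simp

lemma act_heap:
  assumes "x \<in> X" "heap cfg" "length (decode cfg) < length cfg"
  shows "heap (act x cfg) \<and> trace_equiv R (decode (act x cfg)) (x # decode cfg)"
proof -
  obtain c0 where "c0 \<in> set cfg" "\<not> blocked x c0"
    using free_cell_exists[OF assms(2,3)] by (auto simp: blocked_def)
  then obtain p c s where cfg: "cfg = p @ c # s" "\<not> blocked x c" "\<forall>d\<in>set p. blocked x d"
    using split_list_first_prop[of cfg "\<lambda>c. \<not> blocked x c"] by blast
  have "heap (p @ c # s)"
    using assms(2) cfg(1) by simp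
  then show ?thesis
    unfolding cfg(1) act_split[OF assms(1) cfg(3,2)]
    using heap_step[OF assms(1) cfg(3)] decode_step[OF assms(1) cfg(2)] by blast
qed

lemma heap_invariant:
  assumes "w \<in> lists X" "length w < m"
  shows "heap (foldr act w (replicate m 0))
    \<and> trace_equiv R (decode (foldr act w (replicate m 0))) w
    \<and> length (foldr act w (replicate m 0)) = m"
  using assms
proof (induction w)
  case Nil
  have "placed (replicate k 0) = {}" for k
    by (induction k) (simp_all add: layer_set_def)
  then have "heap (replicate m 0)"
    by (induction m) (simp_all add: shadow_set_def)
  moreover have "decode (replicate m 0) = []"
    by (induction m) (simp_all add: decode_simps layer_def layer_set_def)
  ultimately show ?case
    by (simp add: trace_equiv_refl)
next
  case (Cons x w)
  let ?cfg = "foldr act w (replicate m 0)"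
  have IH: "heap ?cfg" "trace_equiv R (decode ?cfg) w" "length ?cfg = m"
    using Cons by auto
  then have "length (decode ?cfg) < length ?cfg"
    using Cons.prems trace_equiv_length[OF IH(2)] by simp
  moreover have "x \<in> X"
    using Cons by simp
  ultimately have step: "heap (act x ?cfg)"
    "trace_equiv R (decode (act x ?cfg)) (x # decode ?cfg)"
    using act_heap[of x ?cfg] IH(1) by auto
  have "trace_equiv R ([x] @ decode ?cfg @ []) ([x] @ w @ [])"
    using IH(2) by (rule trace_equiv_cong)
  then have "trace_equiv R (decode (act x ?cfg)) (x # w)"
    using step(2) trace_equiv_trans by auto
  then show ?case
    using step(1) IH(3) by (simp add: act_length)
qed

lemma word_map_eq_iff_trace_equiv:
  assumes "u \<in> lists X" "v \<in> lists X"
  shows "word_map Sig next_state emit (\<lambda>x. Suc (h x)) u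
           = word_map Sig next_state emit (\<lambda>x. Suc (h x)) v
         \<longleftrightarrow> trace_equiv R u v"
    (is "?phi u = ?phi v \<longleftrightarrow> _")
proof -
  have phi: "?phi w = restrict (foldr act w) (lists Sig)" for w
    by (simp add: word_map_def act_def[abs_def] restrict_def)
  show ?thesis
    unfolding phi
  proof
    assume "restrict (foldr act u) (lists Sig) = restrict (foldr act v) (lists Sig)"
    define m where "m = length u + length v + 1"
    have "replicate m 0 \<in> lists Sig"
      by (induction m) (simp_all add: Sig_def)
    then have "foldr act u (replicate m 0) = foldr act v (replicate m 0)"
      using fun_cong[OF \<open>restrict (foldr act u) _ = _\<close>, of "replicate m 0"] by simp
    moreover have "trace_equiv R (decode (foldr act u (replicate m 0))) u"
      and decode_v: "trace_equiv R (decode (foldr act v (replicate m 0))) v"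
      using heap_invariant[OF assms(1), of m] heap_invariant[OF assms(2), of m]
      by (simp_all add: m_def)
    ultimately have "trace_equiv R u (decode (foldr act v (replicate m 0)))"
      by (simp add: trace_equiv_sym)
    then show "trace_equiv R u v"
      using decode_v by (rule trace_equiv_trans)
  next
    assume "trace_equiv R u v"
    with act_commute have "foldr act u = foldr act v"
      by (rule foldr_trace_invariant)
    then show "restrict (foldr act u) (lists Sig) = restrict (foldr act v) (lists Sig)"
      by simp
  qed
qed

end

theorem mainTheorem19:
  fixes X :: "'a set" and R :: "('a \<times> 'a) set"
  assumes "finite X" and "R \<subseteq> X \<times> X"
  shows "\<exists>Q Sig t out phi. is_automaton Q Sig t out \<and>
           is_fpcm_iso X R (automaton_semigroup Q Sig t out) (compose (lists Sig)) phi"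
proof -
  obtain h where "bij_betw h X {0..<card X}"
    using ex_bij_betw_finite_nat[OF assms(1)] by blast
  moreover obtain xs where "set xs = X" "distinct xs"
    using finite_distinct_list[OF assms(1)] by blast
  ultimately interpret heap_automaton X R h "card X" xs
    using assms(2) by unfold_locales
  let ?phi = "word_map Sig next_state emit (\<lambda>x. Suc (h x))"
  have states: "(\<lambda>x. Suc (h x)) ` X \<subseteq> states"
    using states_eq by blast
  have "?phi ` lists X = automaton_semigroup states Sig next_state emit"
    using automaton_semigroup_word_image[OF heap_is_automaton states_eq state_zero_idle] ..
  moreover have "?phi (u @ v) = compose (lists Sig) (?phi u) (?phi v)" if "v \<in> lists X" for u v
    using word_map_append[OF heap_is_automaton states that] .
  ultimately have "is_fpcm_iso X R (automaton_semigroup states Sig next_state emit)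
      (compose (lists Sig)) ?phi"
    unfolding is_fpcm_iso_def using word_map_eq_iff_trace_equiv by blast
  then show ?thesis
    using heap_is_automaton by blast
qed

end
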